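(* Let $n\ge2$ and $p\in(0,1)$. The vector \[\psi_{\delta^{(n)}}=\sum_{\substack{w\in\mathfrak S_n\\ w^{-1}(1)<w^{-1}(n)}}\zeta_{\delta^{(n)}}(w,0)\,\big(e_{w^{-1}(1)}-e_{w^{-1}(n)}\big)\] is a positive scalar multiple of \[\sum_{1\le i<j\le n}\frac{(j-i)\,(2n-(i+j-1)p)}{(n-ip)(n-(i-1)p)(n-jp)(n-(j-1)p)}\,(e_i-e_j).\]
   Context: Type $A_{n-1}$ setting: $e_1,\dots,e_n$ is the standard basis of $\mathbb R^n$. $\mathfrak S_n$ is the symmetric group; for $i\in\mathbb Z/n\mathbb Z$, $\overline s_i\in\mathfrak S_n$ is the transposition swapping $i$ and $i+1$ (so $\overline s_0$ swaps $n$ and $1$), and $\overline s_iw$ denotes composition. For integers $k,k'$, $\mathfrak f_0(k,k')=1$ if $k>k'$ and $0$ otherwise. Let $\mathbf M_{\delta^{(n)}}$ be the Markov chain on $\mathfrak S_n\times\mathbb Z/n\mathbb Z$ with transition probabilities $\mathbb P((w,i)\to(\overline s_iw,i+1))=p\,\mathfrak f_0(w^{-1}(i),w^{-1}(i+1))$ and $\mathbb P((w,i)\to(w,i+1))=1-p\,\mathfrak f_0(w^{-1}(i),w^{-1}(i+1))$ (indices mod $n$, $w^{-1}(0):=w^{-1}(n)$, $w^{-1}(n+1):=w^{-1}(1)$), all others zero; $\zeta_{\delta^{(n)}}$ is its stationary distribution. (This chain is the toric projection of the affine Grassmannian reduced random combinatorial billiard trajectory in $\widetilde{\mathfrak S}_n$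 with initial direction $\delta^{(n)}=-ne_n+\sum_{j=1}^ne_j$, whose alcove word is $\cdots\mathsf c\mathsf c\mathsf c$ with $\mathsf c=s_{n-1}\cdots s_1s_0$, and $\psi_{\delta^{(n)}}$ is the vector governing the asymptotic direction of that trajectory.) *)

theory Defs
  imports Complex_Main "HOL-Combinatorics.Combinatorics"
begin

text \<open>Permutations of {1..n} are functions nat => nat with w permutes {1..n}.
  Elements of Z/nZ are represented by {0..<n}.\<close>

definition Sn :: "nat \<Rightarrow> (nat \<Rightarrow> nat) set" where
  "Sn n = {w. w permutes {1..n}}"

definition states :: "nat \<Rightarrow> ((nat \<Rightarrow> nat) \<times> nat) set" where
  "states n = Sn n \<times> {0..<n}"

definition f0 :: "nat \<Rightarrow> nat \<Rightarrow> real" where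
  "f0 k k' = (if k > k' then 1 else 0)"

text \<open>Representatives of i and i+1 in {1..n}: i (with 0 read as n) and i+1 (with n+1 read as 1).\<close>
definition lo :: "nat \<Rightarrow> nat \<Rightarrow> nat" where
  "lo n i = (if i = 0 then n else i)"

definition hi :: "nat \<Rightarrow> nat \<Rightarrow> nat" where
  "hi n i = i + 1"

definition sbar_comp :: "nat \<Rightarrow> nat \<Rightarrow> (nat \<Rightarrow> nat) \<Rightarrow> (nat \<Rightarrow> nat)" where
  "sbar_comp n i w = Transposition.transpose (lo n i) (hi n i) \<circ> w"

definition flipprob :: "real \<Rightarrow> nat \<Rightarrow> (nat \<Rightarrow> nat) \<Rightarrow> nat \<Rightarrow> real" where
  "flipprob p n w i = p * f0 (inv w (lo n i)) (inv w (hi n i))"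

definition trans_prob :: "real \<Rightarrow> nat \<Rightarrow> (nat \<Rightarrow> nat) \<times> nat \<Rightarrow> (nat \<Rightarrow> nat) \<times> nat \<Rightarrow> real" where
  "trans_prob p n x y =
     (let (w, i) = x; (w', i') = y in
      if i' = (i + 1) mod n then
        (if w' = sbar_comp n i w then flipprob p n w i
         else if w' = w then 1 - flipprob p n w i else 0)
      else 0)"

definition is_stationary :: "real \<Rightarrow> nat \<Rightarrow> ((nat \<Rightarrow> nat) \<times> nat \<Rightarrow> real) \<Rightarrow> bool" where
  "is_stationary p n \<zeta> \<longleftrightarrow>
     (\<forall>x\<in>states n. \<zeta> x \<ge> 0) \<and>
     (\<Sum>x\<in>states n. \<zeta> x) = 1 \<and>
     (\<forall>y\<in>states n. \<zeta> y = (\<Sum>x\<in>states n. \<zeta> x * trans_prob p n x y))"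

text \<open>Vectors in R^n are functions on {1..n}; e k is the k-th standard basis vector.\<close>
definition evec :: "nat \<Rightarrow> nat \<Rightarrow> real" where
  "evec k = (\<lambda>m. if m = k then 1 else 0)"

definition psi :: "nat \<Rightarrow> ((nat \<Rightarrow> nat) \<times> nat \<Rightarrow> real) \<Rightarrow> nat \<Rightarrow> real" where
  "psi n \<zeta> = (\<lambda>m. \<Sum>w\<in>{w\<in>Sn n. inv w 1 < inv w n}.
                    \<zeta> (w, 0) * (evec (inv w 1) m - evec (inv w n) m))"

definition target :: "real \<Rightarrow> nat \<Rightarrow> nat \<Rightarrow> real" where
  "target p n = (\<lambda>m. \<Sum>(i, j)\<in>{(i, j). 1 \<le> i \<and> i < j \<and> j \<le> n}.
      (real (j - i) * (2 * real n - real (i + j - 1) * p)) /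
      ((real n - real i * p) * (real n - real (i - 1) * p) *
       (real n - real j * p) * (real n - real (j - 1) * p))
      * (evec i m - evec j m))"

end

theory Submission
  imports Defs
begin

text \<open>
  Both vectors are compared through their partial sums over the coordinates 1..k.
  For the target vector these telescope: its coefficients are mixed second differences of
  G(x, y) = x y (y - x) / (n (n - x p) (n - y p)), so the k-th partial sum is G(k, n).
  For psi the k-th partial sum is the stationary mass of the states (w, 0) with
  inv w 1 \<le> k < inv w n. Remembering only the set of values that w puts in the positions
  k+1..n lumps the chain to a discrete-time TASEP on the cycle 1..n whose stationary law is
  uniform up to a factor 1/(1 - p) when the site about to be updated is occupied; uniqueness
  follows from a maximum principle. Counting configurations then gives the partial sum
  (1 - p)/(n - 1) G(k, n).
\<close>

section \<open>Partial sums of the target vector\<close>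

lemma sum_greaterThanAtMost_telescope:
  fixes f :: "nat \<Rightarrow> 'a::ab_group_add"
  assumes "k \<le> m"
  shows "(\<Sum>j\<in>{k<..m}. f j - f (j - 1)) = f m - f k"
proof -
  have "{k<..m} = {Suc k..<Suc m}" by auto
  then show ?thesis
    using sum_Suc_diff'[OF assms, of f] by (simp only: sum.shift_bounds_Suc_ivl diff_Suc_1)
qed

lemma diff_mult_pos:
  assumes "0 < p" "p < 1" "t \<le> n" "0 < n"
  shows "0 < real n - real t * p"
proof -
  have "real t * p < real n"
  proof (cases "t = 0")
    case False
    then have "real t * p < real t * 1"
      using assms by (intro mult_strict_left_mono) auto
    then show ?thesis using assms by linarith
  qed (use assms in simp)
  then show ?thesis by simp
qed

definition target_potential :: "real \<Rightarrow> real \<Rightarrow> real \<Rightarrow> real \<Rightarrow> real" where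
  "target_potential p N x y = x * y * (y - x) / (N * (N - x * p) * (N - y * p))"

lemma target_potential_mixed_difference:
  fixes p N x y :: real
  assumes "N \<noteq> 0" "N - x * p \<noteq> 0" "N - (x + 1) * p \<noteq> 0" "N - y * p \<noteq> 0" "N - (y + 1) * p \<noteq> 0"
  shows "(y - x) * (2 * N - (x + y + 1) * p) /
           ((N - (x + 1) * p) * (N - x * p) * (N - (y + 1) * p) * (N - y * p))
       = (target_potential p N (x + 1) (y + 1) - target_potential p N (x + 1) y)
         - (target_potential p N x (y + 1) - target_potential p N x y)"
proof -
  let ?D = "N * (N - x * p) * (N - (x + 1) * p) * (N - y * p) * (N - (y + 1) * p)"
  have "(y - x) * (2 * N - (x + y + 1) * p) /
           ((N - (x + 1) * p) * (N - x * p) * (N - (y + 1) * p) * (N - y * p)) * ?D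
      = ((target_potential p N (x + 1) (y + 1) - target_potential p N (x + 1) y)
         - (target_potential p N x (y + 1) - target_potential p N x y)) * ?D"
    using assms unfolding target_potential_def
    by (simp add: divide_simps) (simp add: algebra_simps)
  then show ?thesis using assms by simp
qed

definition target_coeff :: "real \<Rightarrow> nat \<Rightarrow> nat \<Rightarrow> nat \<Rightarrow> real" where
  "target_coeff p n i j = (real (j - i) * (2 * real n - real (i + j - 1) * p)) /
      ((real n - real i * p) * (real n - real (i - 1) * p) *
       (real n - real j * p) * (real n - real (j - 1) * p))"

lemma target_coeff_mixed_difference:
  assumes "0 < p" "p < 1" "1 \<le> i" "i < j" "j \<le> n"
  defines "G \<equiv> \<lambda>u v. target_potential p (real n) (real u) (real v)"
  shows "target_coeff p n i j = (G i j - G i (j - 1)) - (G (i - 1) j - G (i - 1) (j - 1))"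
proof -
  obtain a b where a: "i = Suc a" and b: "j = Suc b" and "a < b"
    using assms by (cases i; cases j) auto
  have nz: "real n - real t * p \<noteq> 0" if "t \<le> n" for t
    using diff_mult_pos[OF assms(1,2) that] assms by simp
  have "real (j - i) = real b - real a" "real (i + j - 1) = real a + real b + 1"
    using \<open>a < b\<close> unfolding a b by simp_all
  then show ?thesis
    using target_potential_mixed_difference[of "real n" "real a" p "real b"]
      nz[of a] nz[of "Suc a"] nz[of b] nz[of "Suc b"] \<open>a < b\<close> assms(5)
    unfolding target_coeff_def G_def a b by (simp add: add.commute mult.commute)
qed

lemma sum_target_coeff_cut:
  assumes "0 < p" "p < 1" "k \<le> n"
  shows "(\<Sum>i=1..k. \<Sum>j\<in>{k<..n}. target_coeff p n i j)
       = target_potential p (real n) (real k) (real n)"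
proof -
  define G where "G u v = target_potential p (real n) (real u) (real v)" for u v
  define H where "H i = G i n - G i k" for i
  have "(\<Sum>j\<in>{k<..n}. target_coeff p n i j) = H i - H (i - 1)" if "i \<in> {1..k}" for i
  proof -
    have "(\<Sum>j\<in>{k<..n}. target_coeff p n i j)
        = (\<Sum>j\<in>{k<..n}. G i j - G i (j - 1)) - (\<Sum>j\<in>{k<..n}. G (i - 1) j - G (i - 1) (j - 1))"
      unfolding sum_subtractf[symmetric] G_def
      by (rule sum.cong[OF refl], rule target_coeff_mixed_difference) (use that assms in auto)
    then show ?thesis
      unfolding H_def using sum_greaterThanAtMost_telescope[OF assms(3), of "G i"]
        sum_greaterThanAtMost_telescope[OF assms(3), of "G (i - 1)"] by simp
  qed
  then have "(\<Sum>i=1..k. \<Sum>j\<in>{k<..n}. target_coeff p n i j) = (\<Sum>i\<in>{0<..k}. H i - H (i - 1))"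
    by (intro sum.cong) auto
  also have "\<dots> = H k - H 0" by (rule sum_greaterThanAtMost_telescope) simp
  also have "\<dots> = G k n" unfolding H_def G_def target_potential_def by simp
  finally show ?thesis unfolding G_def .
qed

lemma sum_evec_upto: "1 \<le> c \<Longrightarrow> (\<Sum>m=1..k. evec c m) = (if c \<le> k then 1 else 0)"
  unfolding evec_def by (simp add: sum.delta)

lemma sum_target_upto:
  assumes "0 < p" "p < 1" "k \<le> n"
  shows "(\<Sum>m=1..k. target p n m) = target_potential p (real n) (real k) (real n)"
proof -
  let ?P = "{(i, j). 1 \<le> i \<and> i < j \<and> j \<le> n}"
  have "(\<Sum>m=1..k. target p n m)
      = (\<Sum>(i, j)\<in>?P. target_coeff p n i j * ((\<Sum>m=1..k. evec i m) - (\<Sum>m=1..k. evec j m)))"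
    unfolding target_def target_coeff_def[symmetric]
    by (subst sum.swap) (simp add: case_prod_beta sum_distrib_left sum_subtractf right_diff_distrib)
  also have "\<dots> = (\<Sum>(i, j)\<in>?P. if i \<le> k \<and> k < j then target_coeff p n i j else 0)"
    using sum_evec_upto by (intro sum.cong) (auto simp del: One_nat_def)
  also have "\<dots> = (\<Sum>(i, j)\<in>{1..k} \<times> {k<..n}. target_coeff p n i j)"
    by (rule sum.mono_neutral_cong_right)
      (use assms in \<open>auto intro: finite_subset[of _ "{1..n} \<times> {1..n}"] split: if_splits\<close>)
  also have "\<dots> = target_potential p (real n) (real k) (real n)"
    using sum_target_coeff_cut[OF assms] by (simp add: sum.cartesian_product[symmetric])
  finally show ?thesis .
qed

section \<open>Partial sums of psi\<close>

lemma Sn_inv_in_range: "w \<in> Sn n \<Longrightarrow> x \<in> {1..n} \<Longrightarrow> inv w x \<in> {1..n}"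
  unfolding Sn_def by (metis permutes_inv permutes_in_image mem_Collect_eq)

lemma finite_Sn: "finite (Sn n)"
  unfolding Sn_def by (rule finite_permutations) simp

lemma sum_psi_upto:
  assumes "1 \<le> n"
  shows "(\<Sum>m=1..k. psi n \<zeta> m) = (\<Sum>w | w \<in> Sn n \<and> inv w 1 \<le> k \<and> k < inv w n. \<zeta> (w, 0))"
proof -
  have "(\<Sum>m=1..k. psi n \<zeta> m)
      = (\<Sum>w | w \<in> Sn n \<and> inv w 1 < inv w n.
           \<zeta> (w, 0) * ((\<Sum>m=1..k. evec (inv w 1) m) - (\<Sum>m=1..k. evec (inv w n) m)))"
    unfolding psi_def by (subst sum.swap) (simp add: sum_distrib_left sum_subtractf right_diff_distrib)
  also have "\<dots> = (\<Sum>w | w \<in> Sn n \<and> inv w 1 < inv w n.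
                      if inv w 1 \<le> k \<and> k < inv w n then \<zeta> (w, 0) else 0)"
    using Sn_inv_in_range[of _ n 1] Sn_inv_in_range[of _ n n] sum_evec_upto assms
    by (intro sum.cong) (auto simp del: One_nat_def)
  also have "\<dots> = (\<Sum>w | w \<in> Sn n \<and> inv w 1 \<le> k \<and> k < inv w n. \<zeta> (w, 0))"
    by (rule sum.mono_neutral_cong_right) (use finite_Sn in auto)
  finally show ?thesis .
qed

section \<open>Lumping onto particle configurations\<close>

text \<open>
  The values that w places in the positions k+1..n are read as particles on the cycle 1..n.
  Along the chain they perform a TASEP with sequential update: at time i a particle on
  lo n i jumps to an empty hi n i with probability p, and lumped_trans is its kernel.
\<close>

definition particles :: "nat \<Rightarrow> nat \<Rightarrow> (nat \<Rightarrow> nat) \<Rightarrow> nat set" where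
  "particles n k w = {x \<in> {1..n}. k < inv w x}"

definition configs :: "nat \<Rightarrow> nat \<Rightarrow> nat set set" where
  "configs n k = {B. B \<subseteq> {1..n} \<and> card B = n - k}"

definition lumped_trans :: "real \<Rightarrow> nat \<Rightarrow> nat set \<Rightarrow> nat \<Rightarrow> nat set \<Rightarrow> nat \<Rightarrow> real" where
  "lumped_trans p n A i B j =
     (if j = (i + 1) mod n then
        (if lo n i \<in> A \<and> hi n i \<notin> A then
           (if B = A then 1 - p else if B = insert (hi n i) (A - {lo n i}) then p else 0)
         else (if B = A then 1 else 0))
      else 0)"

definition lumped :: "nat \<Rightarrow> nat \<Rightarrow> ((nat \<Rightarrow> nat) \<times> nat \<Rightarrow> real) \<Rightarrow> nat set \<Rightarrow> nat \<Rightarrow> real" where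
  "lumped n k \<zeta> B j = (\<Sum>w | w \<in> Sn n \<and> particles n k w = B. \<zeta> (w, j))"

lemma lo_hi_in_range:
  assumes "2 \<le> n" "i < n"
  shows "lo n i \<in> {1..n}" "hi n i \<in> {1..n}" "lo n i \<noteq> hi n i"
  using assms unfolding lo_def hi_def by auto

lemma finite_configs: "finite (configs n k)"
  unfolding configs_def by (rule finite_subset[of _ "Pow {1..n}"]) auto

lemma particles_eq_image:
  assumes "w \<in> Sn n"
  shows "particles n k w = w ` {k<..n}"
proof -
  have w: "w permutes {1..n}" using assms unfolding Sn_def by simp
  have "x \<in> w ` {k<..n}" if "x \<in> {1..n}" "k < inv w x" for x
    using that Sn_inv_in_range[OF assms] permutes_inverses(1)[OF w]
    by (auto intro!: image_eqI[of _ _ "inv w x"])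
  moreover have "w y \<in> particles n k w" if "y \<in> {k<..n}" for y
    using that permutes_in_image[OF w, of y] permutes_inverses(2)[OF w]
    unfolding particles_def by auto
  ultimately show ?thesis unfolding particles_def by auto
qed

lemma particles_in_configs: "w \<in> Sn n \<Longrightarrow> particles n k w \<in> configs n k"
  using particles_eq_image[of w n k] permutes_inj_on[of w "{1..n}" "{k<..n}"]
  unfolding configs_def Sn_def by (auto simp: card_image particles_def)

lemma sbar_comp_in_Sn: "2 \<le> n \<Longrightarrow> i < n \<Longrightarrow> v \<in> Sn n \<Longrightarrow> sbar_comp n i v \<in> Sn n"
  using lo_hi_in_range[of n i] unfolding Sn_def sbar_comp_def
  by (simp add: permutes_compose permutes_swap_id)

lemma sbar_comp_neq:
  assumes "2 \<le> n" "i < n" "v \<in> Sn n"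
  shows "sbar_comp n i v \<noteq> v"
proof
  assume eq: "sbar_comp n i v = v"
  have "v (inv v (lo n i)) = lo n i"
    using assms(3) unfolding Sn_def by (simp add: permutes_inverses(1))
  then have "Transposition.transpose (lo n i) (hi n i) (lo n i) = lo n i"
    using fun_cong[OF eq, of "inv v (lo n i)"] unfolding sbar_comp_def by simp
  then show False using lo_hi_in_range[OF assms(1,2)] by simp
qed

lemma particles_sbar_comp:
  assumes "2 \<le> n" "i < n" "v \<in> Sn n"
  shows "particles n k (sbar_comp n i v) = Transposition.transpose (lo n i) (hi n i) ` particles n k v"
  using particles_eq_image[OF sbar_comp_in_Sn[OF assms]] particles_eq_image[OF assms(3)]
  unfolding sbar_comp_def by (simp add: image_comp)

lemma transpose_image_move:
  assumes "a \<in> A" "b \<notin> A"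
  shows "Transposition.transpose a b ` A = insert b (A - {a})"
proof (rule set_eqI)
  fix x
  show "x \<in> Transposition.transpose a b ` A \<longleftrightarrow> x \<in> insert b (A - {a})"
    using assms by (cases "x = a"; cases "x = b") (auto simp: in_transpose_image_iff)
qed

lemma sum_trans_prob_fibre:
  assumes "2 \<le> n" "i < n" "v \<in> Sn n"
  shows "(\<Sum>w | w \<in> Sn n \<and> particles n k w = B. trans_prob p n (v, i) (w, j))
       = (if j = (i + 1) mod n then
            (if particles n k (sbar_comp n i v) = B then flipprob p n v i else 0)
            + (if particles n k v = B then 1 - flipprob p n v i else 0)
          else 0)"
proof -
  define S where "S = {w \<in> Sn n. particles n k w = B}"
  have "finite S" unfolding S_def using finite_Sn by simp
  have "trans_prob p n (v, i) (w, j) = (if j = (i + 1) mod n then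
          (if w = sbar_comp n i v then flipprob p n v i else 0)
          + (if w = v then 1 - flipprob p n v i else 0) else 0)" for w
    using sbar_comp_neq[OF assms] unfolding trans_prob_def by simp
  then have "(\<Sum>w\<in>S. trans_prob p n (v, i) (w, j)) = (if j = (i + 1) mod n then
          (\<Sum>w\<in>S. if w = sbar_comp n i v then flipprob p n v i else 0)
          + (\<Sum>w\<in>S. if w = v then 1 - flipprob p n v i else 0) else 0)"
    by (simp add: sum.distrib)
  with \<open>finite S\<close> show ?thesis
    using sbar_comp_in_Sn[OF assms] assms(3) unfolding S_def by (simp add: sum.delta)
qed

lemma sum_trans_prob_particles:
  assumes "2 \<le> n" "i < n" "v \<in> Sn n"
  shows "(\<Sum>w | w \<in> Sn n \<and> particles n k w = B. trans_prob p n (v, i) (w, j))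
       = lumped_trans p n (particles n k v) i B j"
proof -
  define l h A where "l = lo n i" and "h = hi n i" and "A = particles n k v"
  have lh: "l \<in> {1..n}" "h \<in> {1..n}" "l \<noteq> h"
    using lo_hi_in_range[OF assms(1,2)] unfolding l_def h_def by auto
  have mem: "x \<in> A \<longleftrightarrow> k < inv v x" if "x \<in> {1..n}" for x
    using that unfolding A_def particles_def by simp
  have fibre: "(\<Sum>w | w \<in> Sn n \<and> particles n k w = B. trans_prob p n (v, i) (w, j))
      = (if j = (i + 1) mod n then
           (if Transposition.transpose l h ` A = B then flipprob p n v i else 0)
           + (if A = B then 1 - flipprob p n v i else 0)
         else 0)"
    using sum_trans_prob_fibre[OF assms] particles_sbar_comp[OF assms]
    unfolding l_def h_def A_def by simp
  have kernel: "lumped_trans p n A i B j = (if j = (i + 1) mod n then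
      (if l \<in> A \<and> h \<notin> A then (if B = A then 1 - p else if B = insert h (A - {l}) then p else 0)
       else if B = A then 1 else 0) else 0)"
    unfolding lumped_trans_def l_def h_def by (rule refl)
  consider "l \<in> A" "h \<notin> A" | "l \<notin> A" "h \<in> A" | "l \<in> A \<longleftrightarrow> h \<in> A" by blast
  then show ?thesis
  proof cases
    case 1
    then have "flipprob p n v i = p"
      using mem[OF lh(1)] mem[OF lh(2)] unfolding flipprob_def f0_def l_def h_def by simp
    moreover have "insert h (A - {l}) \<noteq> A" "A \<noteq> insert h (A - {l})" using 1 by auto
    ultimately show ?thesis
      using 1 unfolding fibre A_def[symmetric] kernel transpose_image_move[OF 1]
      by (cases "B = A"; cases "B = insert h (A - {l})") simp_all
  next
    case 2
    then have "flipprob p n v i = 0"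
      using mem[OF lh(1)] mem[OF lh(2)] unfolding flipprob_def f0_def l_def h_def by simp
    then show ?thesis
      using 2 unfolding fibre A_def[symmetric] kernel by (cases "B = A") simp_all
  next
    case 3
    then show ?thesis
      unfolding fibre A_def[symmetric] kernel by (cases "B = A") simp_all
  qed
qed

lemma sum_states_by_particles:
  "(\<Sum>x\<in>states n. g x)
     = (\<Sum>(A, i)\<in>configs n k \<times> {0..<n}. \<Sum>w | w \<in> Sn n \<and> particles n k w = A. g (w, i))"
proof -
  have "(\<Sum>x\<in>states n. g x) = (\<Sum>i\<in>{0..<n}. \<Sum>w\<in>Sn n. g (w, i))"
    unfolding states_def sum.cartesian_product' by (rule sum.swap)
  also have "\<dots> = (\<Sum>i\<in>{0..<n}. \<Sum>A\<in>configs n k. \<Sum>w | w \<in> Sn n \<and> particles n k w = A. g (w, i))"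
    by (intro sum.cong refl sum.group[symmetric])
      (use finite_Sn finite_configs particles_in_configs in auto)
  also have "\<dots> = (\<Sum>A\<in>configs n k. \<Sum>i\<in>{0..<n}. \<Sum>w | w \<in> Sn n \<and> particles n k w = A. g (w, i))"
    by (rule sum.swap)
  also have "\<dots> = (\<Sum>(A, i)\<in>configs n k \<times> {0..<n}. \<Sum>w | w \<in> Sn n \<and> particles n k w = A. g (w, i))"
    by (simp add: sum.cartesian_product')
  finally show ?thesis .
qed

lemma lumped_total:
  assumes "is_stationary p n \<zeta>"
  shows "(\<Sum>(A, i)\<in>configs n k \<times> {0..<n}. lumped n k \<zeta> A i) = 1"
  using assms sum_states_by_particles[of \<zeta> n k] unfolding is_stationary_def lumped_def by simp

lemma lumped_balance:
  assumes "2 \<le> n" "is_stationary p n \<zeta>" "j < n"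
  shows "lumped n k \<zeta> B j
       = (\<Sum>(A, i)\<in>configs n k \<times> {0..<n}. lumped n k \<zeta> A i * lumped_trans p n A i B j)"
proof -
  have "lumped n k \<zeta> B j
      = (\<Sum>w | w \<in> Sn n \<and> particles n k w = B. \<Sum>x\<in>states n. \<zeta> x * trans_prob p n x (w, j))"
    using assms(2,3) unfolding lumped_def is_stationary_def states_def by (intro sum.cong) auto
  also have "\<dots> = (\<Sum>x\<in>states n. \<zeta> x * (\<Sum>w | w \<in> Sn n \<and> particles n k w = B. trans_prob p n x (w, j)))"
    by (subst sum.swap) (simp add: sum_distrib_left)
  also have "\<dots> = (\<Sum>x\<in>states n. \<zeta> x * lumped_trans p n (particles n k (fst x)) (snd x) B j)"
    using sum_trans_prob_particles[OF assms(1)] unfolding states_def by (intro sum.cong) auto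
  also have "\<dots> = (\<Sum>(A, i)\<in>configs n k \<times> {0..<n}. lumped n k \<zeta> A i * lumped_trans p n A i B j)"
    unfolding sum_states_by_particles[where k = k] lumped_def
    by (intro sum.cong) (auto simp: sum_distrib_right)
  finally show ?thesis .
qed

definition pred_mod :: "nat \<Rightarrow> nat \<Rightarrow> nat" where
  "pred_mod n j = (if j = 0 then n - 1 else j - 1)"

lemma pred_mod_cyclic:
  assumes "2 \<le> n" "j < n"
  shows "pred_mod n j < n" "(pred_mod n j + 1) mod n = j" "lo n j = hi n (pred_mod n j)"
  using assms unfolding pred_mod_def lo_def hi_def by auto

lemma pred_mod_unique: "i < n \<Longrightarrow> j = (i + 1) mod n \<Longrightarrow> pred_mod n j = i"
  unfolding pred_mod_def by (cases "i + 1 = n") auto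

text \<open>The image (f P)(B, j) of f under the lumped kernel P; only the time pred_mod n j leads to j.\<close>

definition lumped_step :: "real \<Rightarrow> nat \<Rightarrow> (nat set \<Rightarrow> nat \<Rightarrow> real) \<Rightarrow> nat set \<Rightarrow> nat \<Rightarrow> real" where
  "lumped_step p n f B j =
     (let i = pred_mod n j; l = lo n i; h = hi n i in
      if l \<in> B \<and> h \<notin> B then (1 - p) * f B i
      else if l \<notin> B \<and> h \<in> B then f B i + p * f (insert l (B - {h})) i
      else f B i)"

lemma insert_Diff_in_configs:
  assumes "B \<in> configs n k" "l \<in> {1..n}" "l \<notin> B" "h \<in> B"
  shows "insert l (B - {h}) \<in> configs n k"
proof -
  have "finite B" using assms(1) unfolding configs_def by (auto intro: finite_subset)
  then have "card (insert l (B - {h})) = card B"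
    using assms(3,4) card_gt_0_iff[of B] by (auto simp: card_insert_if card_Diff_singleton)
  then show ?thesis using assms unfolding configs_def by auto
qed

lemma move_particle_iff:
  assumes "l \<noteq> h"
  shows "(l \<in> A \<and> h \<notin> A \<and> B = insert h (A - {l})) \<longleftrightarrow> (l \<notin> B \<and> h \<in> B \<and> A = insert l (B - {h}))"
proof
  assume "l \<in> A \<and> h \<notin> A \<and> B = insert h (A - {l})"
  with assms show "l \<notin> B \<and> h \<in> B \<and> A = insert l (B - {h})" by auto
next
  assume "l \<notin> B \<and> h \<in> B \<and> A = insert l (B - {h})"
  with assms show "l \<in> A \<and> h \<notin> A \<and> B = insert h (A - {l})" by auto
qed

lemma lumped_trans_into:
  assumes "2 \<le> n" "i < n"
  shows "lumped_trans p n A i B ((i + 1) mod n)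
       = (if A = B then (if lo n i \<in> B \<and> hi n i \<notin> B then 1 - p else 1) else 0)
         + (if lo n i \<notin> B \<and> hi n i \<in> B \<and> A = insert (lo n i) (B - {hi n i}) then p else 0)"
proof (cases "A = B")
  case True
  have "B \<noteq> insert (lo n i) (B - {hi n i})" if "lo n i \<notin> B" using that by auto
  with True show ?thesis
    unfolding lumped_trans_def by (cases "lo n i \<in> B"; cases "hi n i \<in> B") simp_all
next
  case False
  then have "lumped_trans p n A i B ((i + 1) mod n)
      = (if lo n i \<in> A \<and> hi n i \<notin> A \<and> B = insert (hi n i) (A - {lo n i}) then p else 0)"
    unfolding lumped_trans_def by (simp add: eq_commute[of B A])
  then show ?thesis
    using False move_particle_iff[OF lo_hi_in_range(3)[OF assms]] by simp
qed

lemma sum_lumped_trans: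
  assumes "2 \<le> n" "B \<in> configs n k" "j < n"
  shows "(\<Sum>(A, i)\<in>configs n k \<times> {0..<n}. f A i * lumped_trans p n A i B j) = lumped_step p n f B j"
proof -
  define i l h where "i = pred_mod n j" and "l = lo n i" and "h = hi n i"
  define A' where "A' = insert l (B - {h})"
  have i: "i < n" "j = (i + 1) mod n" using pred_mod_cyclic[OF assms(1,3)] unfolding i_def by auto
  have other_times: "lumped_trans p n A i' B j = 0" if "i' < n" "i' \<noteq> i" for A i'
  proof -
    have "j \<noteq> (i' + 1) mod n" using pred_mod_unique[OF that(1)] that(2) unfolding i_def by auto
    then show ?thesis unfolding lumped_trans_def by simp
  qed
  have "(\<Sum>i'\<in>{0..<n}. f A i' * lumped_trans p n A i' B j) = f A i * lumped_trans p n A i B j" for A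
    by (subst sum.mono_neutral_right[of "{0..<n}" "{i}"]) (use i(1) other_times in auto)
  then have "(\<Sum>(A, i')\<in>configs n k \<times> {0..<n}. f A i' * lumped_trans p n A i' B j)
      = (\<Sum>A\<in>configs n k. f A i * lumped_trans p n A i B j)"
    by (simp add: sum.cartesian_product')
  also have "\<dots> = (\<Sum>A\<in>configs n k. if A = B then f B i * (if l \<in> B \<and> h \<notin> B then 1 - p else 1) else 0)
      + (\<Sum>A\<in>configs n k. if A = A' then (if l \<notin> B \<and> h \<in> B then p * f A' i else 0) else 0)"
    unfolding sum.distrib[symmetric] i(2) lumped_trans_into[OF assms(1) i(1)] l_def h_def A'_def
    by (intro sum.cong) (auto simp: distrib_left)
  also have "\<dots> = lumped_step p n f B j"
    using assms(2) insert_Diff_in_configs[OF assms(2) lo_hi_in_range(1)[OF assms(1) i(1)]]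
    unfolding lumped_step_def Let_def i_def[symmetric] l_def[symmetric] h_def[symmetric] A'_def
    by (simp add: finite_configs)
  finally show ?thesis .
qed

section \<open>The stationary law of the lumped chain\<close>

definition tasep_weight :: "real \<Rightarrow> nat \<Rightarrow> nat set \<Rightarrow> nat \<Rightarrow> real" where
  "tasep_weight p n B i = (if lo n i \<in> B then 1 / (1 - p) else 1)"

lemma tasep_weight_pos: "p < 1 \<Longrightarrow> 0 < tasep_weight p n B i"
  unfolding tasep_weight_def by simp

lemma tasep_weight_fixed_point:
  assumes "2 \<le> n" "p < 1" "j < n"
  shows "tasep_weight p n B j = lumped_step p n (tasep_weight p n) B j"
proof -
  define i where "i = pred_mod n j"
  have "lo n j = hi n i" "lo n i \<noteq> hi n i"
    using pred_mod_cyclic[OF assms(1,3)] lo_hi_in_range(3)[OF assms(1)] unfolding i_def by auto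
  moreover have "1 + p * (1 / (1 - p)) = 1 / (1 - p)" using assms(2) by (simp add: field_simps)
  ultimately show ?thesis
    using assms(2) unfolding lumped_step_def Let_def i_def[symmetric] tasep_weight_def by auto
qed

lemma downward_closed_eq_atLeastAtMost:
  assumes "finite B" "0 \<notin> B" and closed: "\<And>x. 1 \<le> x \<Longrightarrow> x + 1 \<in> B \<Longrightarrow> x \<in> B"
  shows "B = {1..card B}"
proof (cases "B = {}")
  case False
  define M where "M = Max B"
  have down: "x \<in> B" if "1 \<le> x" "x + d \<in> B" for x d
    using that by (induction d arbitrary: x) (auto intro: closed)
  have "x \<in> B" if "x \<in> {1..M}" for x
    using down[of x "M - x"] that Max_in[OF assms(1) False] unfolding M_def by simp
  moreover have "x \<in> {1..M}" if "x \<in> B" for x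
  proof -
    have "x \<noteq> 0" using that assms(2) by metis
    moreover have "x \<le> M" using Max_ge[OF assms(1) that] unfolding M_def .
    ultimately show ?thesis by simp
  qed
  ultimately have "B = {1..M}" by blast
  then show ?thesis by simp
qed simp

lemma exists_hole_before_particle:
  assumes "B \<subseteq> {1..n}" "B \<noteq> {1..card B}"
  shows "\<exists>x. 1 \<le> x \<and> x < n \<and> x \<notin> B \<and> x + 1 \<in> B"
proof (rule ccontr)
  assume no_gap: "\<not> ?thesis"
  have "B = {1..card B}"
  proof (rule downward_closed_eq_atLeastAtMost)
    show "finite B" "0 \<notin> B" using assms(1) by (auto intro: finite_subset)
  next
    fix x assume "1 \<le> x" "x + 1 \<in> B"
    moreover then have "x < n" using assms(1) by auto
    ultimately show "x \<in> B" using no_gap by blast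
  qed
  with assms(2) show False ..
qed

text \<open>
  Maximum principle: a fixed point f of lumped_step that attains its bound H \<cdot> tasep_weight at
  one state attains it at the predecessors of that state, and these lead from any
  configuration to the packed one {1..n - k}.
\<close>

locale dominated_fixed_point =
  fixes n k :: nat and p H :: real and f :: "nat set \<Rightarrow> nat \<Rightarrow> real"
  assumes n: "2 \<le> n" and p: "0 < p" "p < 1"
    and fixed: "\<And>B j. B \<in> configs n k \<Longrightarrow> j < n \<Longrightarrow> f B j = lumped_step p n f B j"
    and below: "\<And>B j. B \<in> configs n k \<Longrightarrow> j < n \<Longrightarrow> f B j \<le> H * tasep_weight p n B j"
begin

lemma bound_attained_pred_mod:
  assumes B: "B \<in> configs n k" and j: "j < n" and attained: "f B j = H * tasep_weight p n B j"
  defines "i \<equiv> pred_mod n j"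
  defines "A \<equiv> insert (lo n i) (B - {hi n i})"
  shows "f B i = H * tasep_weight p n B i"
    and "lo n i \<notin> B \<Longrightarrow> hi n i \<in> B \<Longrightarrow> f A i = H * tasep_weight p n A i"
proof -
  let ?w = "tasep_weight p n"
  have i: "i < n" using pred_mod_cyclic[OF n j] unfolding i_def by simp
  have step: "f B j = lumped_step p n f B j" "?w B j = lumped_step p n ?w B j"
    using fixed[OF B j] tasep_weight_fixed_point[OF n p(2) j] .
  consider (out) "lo n i \<in> B" "hi n i \<notin> B" | (into) "lo n i \<notin> B" "hi n i \<in> B"
    | (stay) "lo n i \<in> B \<longleftrightarrow> hi n i \<in> B" by blast
  then have "f B i = H * ?w B i \<and> (lo n i \<notin> B \<longrightarrow> hi n i \<in> B \<longrightarrow> f A i = H * ?w A i)"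
  proof cases
    case out
    then have "f B j = (1 - p) * f B i" "?w B j = (1 - p) * ?w B i"
      using step unfolding lumped_step_def Let_def i_def[symmetric] by simp_all
    then have "(1 - p) * (f B i - H * ?w B i) = 0" using attained by (simp add: algebra_simps)
    then have "f B i = H * ?w B i" using p by simp
    then show ?thesis using out by simp
  next
    case into
    have A: "A \<in> configs n k"
      unfolding A_def using insert_Diff_in_configs[OF B lo_hi_in_range(1)[OF n i] into] .
    have sum: "f B i + p * f A i = H * ?w B i + p * (H * ?w A i)"
      using step attained into unfolding lumped_step_def Let_def i_def[symmetric] A_def
      by (simp add: algebra_simps)
    have "p * f A i \<le> p * (H * ?w A i)" using below[OF A i] p by (intro mult_left_mono) auto
    then have B_attained: "f B i = H * ?w B i" using sum below[OF B i] by linarith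
    then have "p * f A i = p * (H * ?w A i)" using sum by linarith
    with B_attained show ?thesis using p by simp
  next
    case stay
    then show ?thesis
      using step attained unfolding lumped_step_def Let_def i_def[symmetric] by auto
  qed
  then show "f B i = H * ?w B i" "lo n i \<notin> B \<Longrightarrow> hi n i \<in> B \<Longrightarrow> f A i = H * ?w A i"
    by simp_all
qed

lemma bound_attained_all_times:
  assumes B: "B \<in> configs n k" and j: "j < n" and attained: "f B j = H * tasep_weight p n B j"
    and i: "i < n"
  shows "f B i = H * tasep_weight p n B i"
proof -
  have down: "f B (t - d) = H * tasep_weight p n B (t - d)"
    if "t < n" "f B t = H * tasep_weight p n B t" "d \<le> t" for t d
    using that(3)
  proof (induction d)
    case (Suc d)
    then have "pred_mod n (t - d) = t - Suc d" unfolding pred_mod_def by simp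
    then show ?case
      using bound_attained_pred_mod(1)[OF B _ Suc.IH] Suc.prems that(1) by simp
  qed (use that in simp)
  show ?thesis
  proof (cases "i \<le> j")
    case True
    then show ?thesis using down[OF j attained, of "j - i"] by simp
  next
    case False
    have "f B 0 = H * tasep_weight p n B 0" using down[OF j attained, of j] by simp
    then have "f B (n - 1) = H * tasep_weight p n B (n - 1)"
      using bound_attained_pred_mod(1)[OF B _ \<open>f B 0 = _\<close>] n unfolding pred_mod_def by simp
    then show ?thesis using down[of "n - 1" "n - 1 - i"] n i by simp
  qed
qed

lemma bound_attained_move_left:
  assumes B: "B \<in> configs n k" and attained: "\<forall>i<n. f B i = H * tasep_weight p n B i"
    and x: "1 \<le> x" "x < n" "x \<notin> B" "x + 1 \<in> B"
  shows "\<forall>i<n. f (insert x (B - {x + 1})) i = H * tasep_weight p n (insert x (B - {x + 1})) i"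
proof -
  define j where "j = (x + 1) mod n"
  have "j < n" unfolding j_def using n by simp
  moreover have "pred_mod n j = x" using pred_mod_unique[OF x(2)] unfolding j_def by simp
  moreover have "lo n x = x" "hi n x = x + 1" unfolding lo_def hi_def using x(1) by auto
  ultimately have "f (insert x (B - {x + 1})) x = H * tasep_weight p n (insert x (B - {x + 1})) x"
    using bound_attained_pred_mod(2)[OF B \<open>j < n\<close>] attained x by simp
  moreover have "insert x (B - {x + 1}) \<in> configs n k"
    using insert_Diff_in_configs[OF B _ x(3,4)] x(1,2) by simp
  ultimately show ?thesis using bound_attained_all_times x(2) by blast
qed

lemma bound_attained_packed:
  assumes "B \<in> configs n k" "\<forall>i<n. f B i = H * tasep_weight p n B i"
  shows "f {1..n - k} 0 = H * tasep_weight p n {1..n - k} 0"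
  using assms
proof (induction "sum id B" arbitrary: B rule: less_induct)
  case less
  have B: "B \<subseteq> {1..n}" "card B = n - k" "finite B"
    using less.prems(1) unfolding configs_def by (auto intro: finite_subset)
  show ?case
  proof (cases "B = {1..card B}")
    case True
    then have "B = {1..n - k}" unfolding B(2) .
    then show ?thesis using less.prems(2) n by auto
  next
    case False
    then obtain x where x: "1 \<le> x" "x < n" "x \<notin> B" "x + 1 \<in> B"
      using exists_hole_before_particle[OF B(1)] by blast
    define B' where "B' = insert x (B - {x + 1})"
    have le: "x + 1 \<le> sum id B" using member_le_sum[of "x + 1" B id] B(3) x(4) by simp
    then have "sum id B' = sum id B - 1"
      unfolding B'_def using B(3) x by (simp add: sum_diff1_nat)
    with le have "sum id B' < sum id B" by simp
    moreover have "B' \<in> configs n k"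
      unfolding B'_def using insert_Diff_in_configs[OF less.prems(1) _ x(3,4)] x(1,2) by simp
    ultimately show ?thesis
      using less.hyps bound_attained_move_left[OF less.prems x] unfolding B'_def by blast
  qed
qed

end

lemma max_ratio_at_packed:
  assumes n: "2 \<le> n" and p: "0 < p" "p < 1"
    and fixed: "\<And>B j. B \<in> configs n k \<Longrightarrow> j < n \<Longrightarrow> f B j = lumped_step p n f B j"
    and B: "B \<in> configs n k" and j: "j < n"
  shows "f B j / tasep_weight p n B j \<le> f {1..n - k} 0 / tasep_weight p n {1..n - k} 0"
proof -
  let ?w = "tasep_weight p n"
  let ?r = "\<lambda>(A, i). f A i / ?w A i"
  define S where "S = configs n k \<times> {0..<n}"
  have S: "finite S" "S \<noteq> {}" using B j finite_configs unfolding S_def by auto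
  define H where "H = Max (?r ` S)"
  have le_H: "f A i / ?w A i \<le> H" if "A \<in> configs n k" "i < n" for A i
    unfolding H_def using S(1) that
    by (intro Max_ge) (auto simp: S_def intro!: rev_image_eqI[of "(A, i)"])
  have below: "f A i \<le> H * ?w A i" if "A \<in> configs n k" "i < n" for A i
    using le_H[OF that] tasep_weight_pos[OF p(2)] by (simp add: pos_divide_le_eq)
  obtain A i where Ai: "(A, i) \<in> S" "?r (A, i) = H"
    using Max_in[of "?r ` S"] S unfolding H_def by fastforce
  interpret dominated_fixed_point n k p H f using n p fixed below by unfold_locales
  have A: "A \<in> configs n k" "i < n" using Ai(1) unfolding S_def by auto
  have "f A i = H * ?w A i"
    using Ai(2) tasep_weight_pos[OF p(2), of n A i] by (simp add: divide_eq_eq)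
  then have "f {1..n - k} 0 = H * ?w {1..n - k} 0"
    using bound_attained_packed[OF A(1)] bound_attained_all_times[OF A] by blast
  with le_H[OF B j] show ?thesis using tasep_weight_pos[OF p(2), of n "{1..n - k}" 0] by simp
qed

lemma lumped_step_minus: "lumped_step p n (\<lambda>B j. - f B j) B j = - lumped_step p n f B j"
  unfolding lumped_step_def Let_def by simp

lemma lumped_step_fixed_point_unique:
  assumes n: "2 \<le> n" and p: "0 < p" "p < 1"
    and fixed: "\<And>B j. B \<in> configs n k \<Longrightarrow> j < n \<Longrightarrow> f B j = lumped_step p n f B j"
    and B: "B \<in> configs n k" and j: "j < n"
  shows "f B j = f {1..n - k} 0 / tasep_weight p n {1..n - k} 0 * tasep_weight p n B j"
proof -
  have "(\<lambda>B j. - f B j) B j = lumped_step p n (\<lambda>B j. - f B j) B j"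
    if "B \<in> configs n k" "j < n" for B j
    using fixed[OF that] by (simp add: lumped_step_minus)
  from max_ratio_at_packed[OF n p this B j] max_ratio_at_packed[OF n p fixed B j]
  have "f B j / tasep_weight p n B j = f {1..n - k} 0 / tasep_weight p n {1..n - k} 0"
    by simp
  then show ?thesis using tasep_weight_pos[OF p(2), of n B j] by (simp add: divide_eq_eq)
qed

section \<open>Counting configurations\<close>

lemma card_subsets_containing:
  assumes "finite U" "x \<in> U"
  shows "card {B. B \<subseteq> U \<and> card B = Suc r \<and> x \<in> B} = card (U - {x}) choose r"
proof -
  have fin: "finite B" if "B \<subseteq> U" for B using finite_subset[OF that assms(1)] .
  have fin': "finite B" if "B \<subseteq> U - {x}" for B using finite_subset[OF that] assms(1) by simp
  have "bij_betw (\<lambda>B. B - {x}) {B. B \<subseteq> U \<and> card B = Suc r \<and> x \<in> B} {B. B \<subseteq> U - {x} \<and> card B = r}"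
  proof (rule bij_betw_byWitness[where f' = "insert x"])
    show "(\<lambda>B. B - {x}) ` {B. B \<subseteq> U \<and> card B = Suc r \<and> x \<in> B} \<subseteq> {B. B \<subseteq> U - {x} \<and> card B = r}"
      using fin by (auto simp: card_Diff_singleton)
    show "insert x ` {B. B \<subseteq> U - {x} \<and> card B = r} \<subseteq> {B. B \<subseteq> U \<and> card B = Suc r \<and> x \<in> B}"
      using fin' assms(2) by (auto simp: card_insert_if)
  qed auto
  then show ?thesis using n_subsets[of "U - {x}" r] assms(1) by (simp add: bij_betw_same_card)
qed

lemma card_subsets_avoiding:
  assumes "finite U"
  shows "card {B. B \<subseteq> U \<and> card B = r \<and> x \<notin> B} = card (U - {x}) choose r"
proof -
  have "{B. B \<subseteq> U \<and> card B = r \<and> x \<notin> B} = {B. B \<subseteq> U - {x} \<and> card B = r}" by auto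
  then show ?thesis using n_subsets[of "U - {x}" r] assms by simp
qed

lemma card_configs_containing:
  assumes "k < n" "x \<in> {1..n}"
  shows "card {B \<in> configs n k. x \<in> B} = (n - 1) choose (n - k - 1)"
proof -
  have "{B \<in> configs n k. x \<in> B} = {B. B \<subseteq> {1..n} \<and> card B = Suc (n - k - 1) \<and> x \<in> B}"
    using assms(1) unfolding configs_def by auto
  then show ?thesis using card_subsets_containing[of "{1..n}" x "n - k - 1"] assms(2) by simp
qed

lemma card_configs_avoiding:
  assumes "x \<in> {1..n}"
  shows "card {B \<in> configs n k. x \<notin> B} = (n - 1) choose (n - k)"
proof -
  have "{B \<in> configs n k. x \<notin> B} = {B. B \<subseteq> {1..n} \<and> card B = n - k \<and> x \<notin> B}"
    unfolding configs_def by auto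
  then show ?thesis using card_subsets_avoiding[of "{1..n}" "n - k" x] assms by simp
qed

lemma card_configs_last_not_first:
  assumes "2 \<le> n" "k < n"
  shows "card {B \<in> configs n k. n \<in> B \<and> 1 \<notin> B} = (n - 2) choose (n - k - 1)"
proof -
  have sub: "B \<subseteq> {1..n} \<and> 1 \<notin> B \<longleftrightarrow> B \<subseteq> {2..n}" for B
  proof
    assume B: "B \<subseteq> {1..n} \<and> 1 \<notin> B"
    show "B \<subseteq> {2..n}"
    proof
      fix x assume "x \<in> B"
      then have "x \<in> {1..n}" "x \<noteq> 1" using B by auto
      then show "x \<in> {2..n}" by simp
    qed
  qed auto
  have "Suc (n - k - 1) = n - k" using assms(2) by simp
  then have "{B \<in> configs n k. n \<in> B \<and> 1 \<notin> B}
      = {B. B \<subseteq> {2..n} \<and> card B = Suc (n - k - 1) \<and> n \<in> B}"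
    unfolding configs_def using sub by (intro set_eqI) (simp only: mem_Collect_eq, blast)
  moreover have "{2..n} - {n} = {2..n - 1}" using assms(1) by auto
  ultimately show ?thesis using card_subsets_containing[of "{2..n}" n "n - k - 1"] assms(1) by simp
qed

lemma sum_tasep_weight:
  assumes "2 \<le> n" "k < n"
  shows "(\<Sum>(B, i)\<in>configs n k \<times> {0..<n}. tasep_weight p n B i)
       = real n * (real ((n - 1) choose (n - k - 1)) / (1 - p) + real ((n - 1) choose (n - k)))"
proof -
  have "(\<Sum>B\<in>configs n k. tasep_weight p n B i)
      = real ((n - 1) choose (n - k - 1)) / (1 - p) + real ((n - 1) choose (n - k))" if "i < n" for i
    using card_configs_containing[OF assms(2) lo_hi_in_range(1)[OF assms(1) that]]
      card_configs_avoiding[OF lo_hi_in_range(1)[OF assms(1) that]]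
    unfolding tasep_weight_def by (simp add: sum.If_cases finite_configs Int_def)
  then have "(\<Sum>i\<in>{0..<n}. \<Sum>B\<in>configs n k. tasep_weight p n B i)
      = real n * (real ((n - 1) choose (n - k - 1)) / (1 - p) + real ((n - 1) choose (n - k)))"
    by simp
  then show ?thesis by (simp add: sum.cartesian_product' sum.swap[of _ "configs n k"])
qed

lemma lumped_eq_weight:
  assumes n: "2 \<le> n" and p: "0 < p" "p < 1" and st: "is_stationary p n \<zeta>"
    and B: "B \<in> configs n k" and j: "j < n"
  shows "lumped n k \<zeta> B j
       = lumped n k \<zeta> {1..n - k} 0 / tasep_weight p n {1..n - k} 0 * tasep_weight p n B j"
  using lumped_balance[OF n st] sum_lumped_trans[OF n]
  by (intro lumped_step_fixed_point_unique[OF n p _ B j]) simp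

lemma sum_psi_upto_lumped:
  assumes "2 \<le> n"
  shows "(\<Sum>m=1..k. psi n \<zeta> m) = (\<Sum>B | B \<in> configs n k \<and> n \<in> B \<and> 1 \<notin> B. lumped n k \<zeta> B 0)"
proof -
  let ?T = "{B \<in> configs n k. n \<in> B \<and> 1 \<notin> B}"
  have "inv w 1 \<le> k \<and> k < inv w n \<longleftrightarrow> particles n k w \<in> ?T" if "w \<in> Sn n" for w
    using particles_in_configs[OF that] assms unfolding particles_def by auto
  then have "{w \<in> Sn n. inv w 1 \<le> k \<and> k < inv w n} = {w \<in> Sn n. particles n k w \<in> ?T}"
    by blast
  then have "(\<Sum>m=1..k. psi n \<zeta> m) = (\<Sum>w | w \<in> Sn n \<and> particles n k w \<in> ?T. \<zeta> (w, 0))"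
    using sum_psi_upto[where k = k and \<zeta> = \<zeta>] assms by simp
  also have "\<dots> = (\<Sum>B\<in>?T. \<Sum>w | w \<in> {w \<in> Sn n. particles n k w \<in> ?T} \<and> particles n k w = B. \<zeta> (w, 0))"
    by (rule sum.group[symmetric]) (use finite_Sn finite_configs in auto)
  also have "\<dots> = (\<Sum>B\<in>?T. lumped n k \<zeta> B 0)"
    unfolding lumped_def by (intro sum.cong refl) auto
  finally show ?thesis by simp
qed

text \<open>M, N1, N0 stand for the binomial coefficients C(n-2, n-k-1), C(n-1, n-k-1), C(n-1, n-k).\<close>

lemma partial_mass_algebra:
  fixes M N1 N0 k m N c p :: real
  assumes M: "0 < M" and k: "0 < k" and m: "0 < m" and N: "N = k + m" "1 < N"
    and p: "0 < p" "p < 1"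
    and r1: "N1 * k = (N - 1) * M" and r0: "N0 * m = (N - 1) * M"
    and c: "c * (N * (N1 / (1 - p) + N0)) = 1"
  shows "c * (M / (1 - p)) = (1 - p) / (N - 1) * target_potential p N k N"
proof -
  have "k * p < k" using k p by simp
  then have "N - k * p > 0" using N m by linarith
  have N1: "N1 = (N - 1) * M / k" and N0: "N0 = (N - 1) * M / m"
    using r1 r0 k m by (simp_all add: field_simps)
  have sum: "N1 / (1 - p) + N0 = (N - 1) * M * (N - k * p) / ((1 - p) * k * m)"
    using k m p unfolding N1 N0 N by (simp add: field_simps)
  have "N * (N1 / (1 - p) + N0) > 0"
    unfolding sum using \<open>N - k * p > 0\<close> M N(2) k m p by simp
  then have "c = 1 / (N * (N1 / (1 - p) + N0))"
    using c by (simp add: eq_divide_eq del: mult_eq_0_iff divide_eq_0_iff)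
  then have "c = (1 - p) * k * m / (N * (N - 1) * M * (N - k * p))"
    unfolding sum using \<open>N - k * p > 0\<close> M N(2) k m p by (simp add: field_simps)
  moreover have "q * k * m / (N * a * M * b) * (M / q) = k * m / (N * a * b)"
    if "q \<noteq> 0" for q a b :: real
    using that M by (simp add: field_simps)
  ultimately have "c * (M / (1 - p)) = k * m / (N * (N - 1) * (N - k * p))"
    using p by simp
  also have "\<dots> = (1 - p) / (N - 1) * target_potential p N k N"
  proof -
    have "q / a * (k * N * m / (N * b * (N * q))) = k * m / (N * a * b)" if "q \<noteq> 0" for q a b :: real
      using that N(2) by (simp add: field_simps)
    moreover have "N - k = m" "N - N * p = N * (1 - p)" using N(1) by (simp_all add: algebra_simps)
    ultimately show ?thesis using p unfolding target_potential_def by simp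
  qed
  finally show ?thesis .
qed

lemma binomial_absorption_pair:
  assumes "1 \<le> k" "k < n"
  shows "real k * real ((n - 1) choose (n - k - 1)) = (real n - 1) * real ((n - 2) choose (n - k - 1))"
    and "real (n - k) * real ((n - 1) choose (n - k)) = (real n - 1) * real ((n - 2) choose (n - k - 1))"
proof -
  have "n - 1 - (n - k - 1) = k" "Suc (n - k - 1) = n - k" "n - 1 - 1 = n - 2" using assms by auto
  then have "k * ((n - 1) choose (n - k - 1)) = (n - 1) * ((n - 2) choose (n - k - 1))"
    "(n - k) * ((n - 1) choose (n - k)) = (n - 1) * ((n - 2) choose (n - k - 1))"
    using binomial_absorb_comp[of "n - 1" "n - k - 1"] binomial_absorption[of "n - k - 1" "n - 1"]
    by simp_all
  moreover have "real (n - 1) = real n - 1" using assms by simp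
  ultimately show "real k * real ((n - 1) choose (n - k - 1)) = (real n - 1) * real ((n - 2) choose (n - k - 1))"
    "real (n - k) * real ((n - 1) choose (n - k)) = (real n - 1) * real ((n - 2) choose (n - k - 1))"
    by (metis of_nat_mult)+
qed

lemma sum_psi_upto_interior:
  assumes n: "2 \<le> n" and p: "0 < p" "p < 1" and st: "is_stationary p n \<zeta>"
    and k: "1 \<le> k" "k < n"
  shows "(\<Sum>m=1..k. psi n \<zeta> m) = (1 - p) / (real n - 1) * target_potential p (real n) (real k) (real n)"
proof -
  let ?w = "tasep_weight p n"
  define c where "c = lumped n k \<zeta> {1..n - k} 0 / ?w {1..n - k} 0"
  define M N1 N0 where "M = real ((n - 2) choose (n - k - 1))"
    and "N1 = real ((n - 1) choose (n - k - 1))" and "N0 = real ((n - 1) choose (n - k))"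
  have lumped_eq: "lumped n k \<zeta> B j = c * ?w B j" if "B \<in> configs n k" "j < n" for B j
    using lumped_eq_weight[OF n p st that] unfolding c_def by simp
  have "(\<Sum>m=1..k. psi n \<zeta> m) = (\<Sum>B | B \<in> configs n k \<and> n \<in> B \<and> 1 \<notin> B. c * (1 / (1 - p)))"
    unfolding sum_psi_upto_lumped[OF n]
    using lumped_eq n by (intro sum.cong refl) (simp add: tasep_weight_def lo_def)
  also have "\<dots> = c * (M / (1 - p))"
    using card_configs_last_not_first[OF n k(2)] unfolding M_def by simp
  also have "\<dots> = (1 - p) / (real n - 1) * target_potential p (real n) (real k) (real n)"
  proof (rule partial_mass_algebra)
    show "0 < M" unfolding M_def using k by simp
    show "real n = real k + real (n - k)" "0 < real k" "0 < real (n - k)" "1 < real n"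
      using n k by auto
    show "N1 * real k = (real n - 1) * M" "N0 * real (n - k) = (real n - 1) * M"
      using binomial_absorption_pair[OF k] unfolding M_def N1_def N0_def by (simp_all add: mult.commute)
    have "1 = (\<Sum>(B, j)\<in>configs n k \<times> {0..<n}. lumped n k \<zeta> B j)"
      using lumped_total[OF st] by simp
    also have "\<dots> = c * (\<Sum>(B, j)\<in>configs n k \<times> {0..<n}. ?w B j)"
      unfolding sum_distrib_left by (intro sum.cong refl) (auto simp: lumped_eq)
    finally show "c * (real n * (N1 / (1 - p) + N0)) = 1"
      unfolding sum_tasep_weight[OF n k(2)] N1_def N0_def by simp
  qed (use p in auto)
  finally show ?thesis .
qed

lemma sum_psi_upto_eq:
  assumes n: "2 \<le> n" and p: "0 < p" "p < 1" and st: "is_stationary p n \<zeta>" and k: "k \<le> n"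
  shows "(\<Sum>m=1..k. psi n \<zeta> m) = (1 - p) / (real n - 1) * target_potential p (real n) (real k) (real n)"
proof -
  consider "k = 0" | "k = n" | "1 \<le> k" "k < n" using k by linarith
  then show ?thesis
  proof cases
    case 1
    then show ?thesis unfolding target_potential_def by simp
  next
    case 2
    have "\<not> n < inv w n" if "w \<in> Sn n" for w using Sn_inv_in_range[OF that, of n] n by simp
    then have "{w \<in> Sn n. inv w 1 \<le> k \<and> k < inv w n} = {}" using 2 by blast
    moreover have "1 \<le> n" using n by simp
    ultimately have "(\<Sum>m=1..k. psi n \<zeta> m) = 0" by (simp only: sum_psi_upto sum.empty)
    then show ?thesis using 2 unfolding target_potential_def by simp
  qed (rule sum_psi_upto_interior[OF n p st])
qed

lemma eq_of_partial_sums: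
  fixes a b :: "nat \<Rightarrow> 'a::comm_ring"
  assumes "\<And>t. t \<le> n \<Longrightarrow> (\<Sum>i=1..t. a i) = c * (\<Sum>i=1..t. b i)" and "m \<in> {1..n}"
  shows "a m = c * b m"
proof -
  obtain m' where m': "m = Suc m'" using assms(2) by (cases m) auto
  then have "a m = (\<Sum>i=1..m. a i) - (\<Sum>i=1..m'. a i)" by simp
  also have "\<dots> = c * (\<Sum>i=1..m. b i) - c * (\<Sum>i=1..m'. b i)"
    using assms(1)[of m] assms(1)[of m'] assms(2) m' by simp
  also have "\<dots> = c * b m" using m' by (simp add: right_diff_distrib[symmetric])
  finally show ?thesis .
qed

theorem theorem1p5:
  fixes n :: nat and p :: real and \<zeta> :: "(nat \<Rightarrow> nat) \<times> nat \<Rightarrow> real"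
  assumes "n \<ge> 2" and "0 < p" and "p < 1"
    and "is_stationary p n \<zeta>"
  shows "\<exists>c>0. \<forall>m\<in>{1..n}. psi n \<zeta> m = c * target p n m"
proof -
  let ?c = "(1 - p) / (real n - 1)"
  have "(\<Sum>m=1..t. psi n \<zeta> m) = ?c * (\<Sum>m=1..t. target p n m)" if "t \<le> n" for t
    unfolding sum_psi_upto_eq[OF assms that] sum_target_upto[OF assms(2,3) that] ..
  then have "\<forall>m\<in>{1..n}. psi n \<zeta> m = ?c * target p n m"
    using eq_of_partial_sums by blast
  moreover have "0 < ?c" using assms(1,3) by simp
  ultimately show ?thesis by blast
qed

end
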